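(* Let $a>b\geq c>d>0$ be real numbers and define $g:\mathbb{R}\to\mathbb{R}$ by $$g(x)=\ln\frac{a^x-b^x}{c^x-d^x}\quad (x\neq 0),\qquad g(0)=\ln\frac{\ln(a/b)}{\ln(c/d)}.$$ Then $g$ is strictly convex on $\mathbb{R}$ if $ad-bc>0$, and strictly concave on $\mathbb{R}$ if $ad-bc<0$. If $ad-bc=0$, then $g$ is a linear function (namely $g(x)=x\ln\frac{b}{d}$).
   Context: The value $g(0)$ is the continuous extension of the expression $\ln\frac{a^x-b^x}{c^x-d^x}$ at $x=0$. *)

theory Defs
  imports "HOL-Analysis.Analysis"
begin

definition strict_convex_on :: "real set \<Rightarrow> (real \<Rightarrow> real) \<Rightarrow> bool" where
  "strict_convex_on S f \<longleftrightarrow> convex S \<and>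
     (\<forall>x\<in>S. \<forall>y\<in>S. \<forall>u. x \<noteq> y \<and> 0 < u \<and> u < 1 \<longrightarrow>
        f (u * x + (1 - u) * y) < u * f x + (1 - u) * f y)"

definition strict_concave_on :: "real set \<Rightarrow> (real \<Rightarrow> real) \<Rightarrow> bool" where
  "strict_concave_on S f \<longleftrightarrow> strict_convex_on S (\<lambda>x. - f x)"

definition gfun :: "real \<Rightarrow> real \<Rightarrow> real \<Rightarrow> real \<Rightarrow> real \<Rightarrow> real" where
  "gfun a b c d x =
     (if x = 0 then ln (ln (a / b) / ln (c / d))
      else ln ((a powr x - b powr x) / (c powr x - d powr x)))"

end

theory Submission
  imports Defs
begin

text \<open>Put \<open>s = ln (a/b) / 2\<close>, \<open>t = ln (c/d) / 2\<close> and \<open>sinhc v = sinh v / v\<close>. Since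
  \<open>a powr x - b powr x = 2 (ab) powr (x/2) \<cdot> s x \<cdot> sinhc (s x)\<close>, one gets
  \<open>g x = x ln (ab/(cd)) / 2 + ln (s/t) + \<phi> x\<close> with \<open>\<phi> x = ln sinhc (s x) - ln sinhc (t x)\<close>,
  and \<open>ad - bc\<close> has the sign of \<open>s - t\<close>. For \<open>s > t > 0\<close> the function \<open>\<phi>\<close> is even,
  and on \<open>x > 0\<close> its derivative \<open>s coth (s x) - t coth (t x)\<close> is positive and strictly
  increasing, because \<open>v coth v\<close> and \<open>sinh v / v\<close> increase for \<open>v > 0\<close>. An even function
  that is increasing and strictly convex on \<open>[0, \<infinity>)\<close> is strictly convex on \<open>\<real>\<close>.
  For \<open>s < t\<close> swap the roles, and for \<open>s = t\<close> only the linear term survives.\<close>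

lemma strict_convex_on_linorderI:
  fixes f :: "real \<Rightarrow> real"
  assumes "convex S"
    and "\<And>x y (u::real). x \<in> S \<Longrightarrow> y \<in> S \<Longrightarrow> x < y \<Longrightarrow> 0 < u \<Longrightarrow> u < 1 \<Longrightarrow>
           f (u * x + (1 - u) * y) < u * f x + (1 - u) * f y"
  shows "strict_convex_on S f"
  unfolding strict_convex_on_def
proof (intro conjI ballI allI impI)
  fix x y u :: real
  assume "x \<in> S" "y \<in> S" and xyu: "x \<noteq> y \<and> 0 < u \<and> u < 1"
  show "f (u * x + (1 - u) * y) < u * f x + (1 - u) * f y"
  proof (cases "x < y")
    case True
    then show ?thesis using assms(2) \<open>x \<in> S\<close> \<open>y \<in> S\<close> xyu by blast
  next
    case False
    then have "y < x" using xyu by simp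
    then have "f ((1 - u) * y + (1 - (1 - u)) * x) < (1 - u) * f y + (1 - (1 - u)) * f x"
      using assms(2)[of y x "1 - u"] \<open>x \<in> S\<close> \<open>y \<in> S\<close> xyu by simp
    then show ?thesis by (simp add: algebra_simps)
  qed
qed (fact assms(1))

lemma strict_convex_on_add_affine:
  fixes f :: "real \<Rightarrow> real"
  assumes "strict_convex_on S f"
  shows "strict_convex_on S (\<lambda>x. f x + L * x + C)"
proof -
  have "L * (u * x + (1 - u) * y) + C = u * (L * x + C) + (1 - u) * (L * y + C)" for u x y :: real
    by (simp add: algebra_simps)
  then show ?thesis
    using assms unfolding strict_convex_on_def by (simp add: algebra_simps)
qed

lemma strict_concave_on_add_affine:
  fixes f :: "real \<Rightarrow> real"
  assumes "strict_concave_on S f"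
  shows "strict_concave_on S (\<lambda>x. f x + L * x + C)"
proof -
  have "strict_convex_on S (\<lambda>x. - f x + (- L) * x + - C)"
    using assms unfolding strict_concave_on_def by (rule strict_convex_on_add_affine)
  then show ?thesis
    unfolding strict_concave_on_def by simp
qed

text \<open>The two mean value theorems on \<open>[x, w]\<close> and \<open>[w, y]\<close> produce slopes
  \<open>l\<^sub>1 < l\<^sub>2\<close>, and the convexity gap equals \<open>u (1 - u) (y - x) (l\<^sub>2 - l\<^sub>1)\<close>.\<close>
lemma strict_convex_on_atLeast_deriv_strict_mono:
  fixes f f' :: "real \<Rightarrow> real"
  assumes cont: "continuous_on {a..} f"
    and deriv: "\<And>z. a < z \<Longrightarrow> (f has_real_derivative f' z) (at z)"
    and mono: "\<And>z w. a < z \<Longrightarrow> z < w \<Longrightarrow> f' z < f' w"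
  shows "strict_convex_on {a..} f"
proof (rule strict_convex_on_linorderI)
  fix x y u :: real
  assume "x \<in> {a..}" "y \<in> {a..}" "x < y" "0 < u" "u < 1"
  define w where "w = u * x + (1 - u) * y"
  have w_x: "w - x = (1 - u) * (y - x)" and y_w: "y - w = u * (y - x)"
    unfolding w_def by (simp_all add: algebra_simps)
  have "0 < (1 - u) * (y - x)" using \<open>x < y\<close> \<open>u < 1\<close> by simp
  with w_x have "x < w" by linarith
  have "0 < u * (y - x)" using \<open>x < y\<close> \<open>0 < u\<close> by simp
  with y_w have "w < y" by linarith
  have "a \<le> x" using \<open>x \<in> {a..}\<close> by simp
  have diff: "f differentiable (at z)" if "a < z" for z
    using deriv[OF that] real_differentiable_def by blast
  have cont_on: "continuous_on {r..s} f" if "a \<le> r" for r s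
    using continuous_on_subset[OF cont] that by auto
  obtain l1 z1 where z1: "x < z1" "z1 < w" "DERIV f z1 :> l1" "f w - f x = (w - x) * l1"
    using MVT[OF \<open>x < w\<close> cont_on diff] \<open>a \<le> x\<close> by auto
  obtain l2 z2 where z2: "w < z2" "z2 < y" "DERIV f z2 :> l2" "f y - f w = (y - w) * l2"
    using MVT[OF \<open>w < y\<close> cont_on diff] \<open>a \<le> x\<close> \<open>x < w\<close> by auto
  have "a < z1" "z1 < z2"
    using \<open>a \<le> x\<close> z1 z2 by linarith+
  then have "l1 = f' z1" "l2 = f' z2"
    using DERIV_unique[OF z1(3) deriv] DERIV_unique[OF z2(3) deriv] by auto
  then have "l1 < l2"
    using mono \<open>a < z1\<close> \<open>z1 < z2\<close> by simp
  then have gap_pos: "0 < u * (1 - u) * (y - x) * (l2 - l1)"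
    using \<open>x < y\<close> \<open>0 < u\<close> \<open>u < 1\<close> by (intro mult_pos_pos) simp_all
  have fw: "f w = f x + (1 - u) * (y - x) * l1"
    using z1(4) unfolding w_x by linarith
  have fy: "f y = f x + (1 - u) * (y - x) * l1 + u * (y - x) * l2"
    using z2(4) unfolding y_w fw by linarith
  have "u * f x + (1 - u) * f y - f w = u * (1 - u) * (y - x) * (l2 - l1)"
    unfolding fy fw by (simp add: algebra_simps)
  with gap_pos show "f (u * x + (1 - u) * y) < u * f x + (1 - u) * f y"
    unfolding w_def by linarith
qed simp

lemma strict_convex_on_abs_comp:
  fixes F :: "real \<Rightarrow> real"
  assumes conv: "strict_convex_on {0..} F" and mono: "strict_mono_on {0..} F"
  shows "strict_convex_on UNIV (\<lambda>x. F \<bar>x\<bar>)"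
  unfolding strict_convex_on_def
proof (intro conjI ballI allI impI)
  fix x y u :: real
  assume "x \<noteq> y \<and> 0 < u \<and> u < 1"
  then have "x \<noteq> y" "0 < u" "u < 1" by auto
  define z where "z = u * x + (1 - u) * y"
  show "F \<bar>u * x + (1 - u) * y\<bar> < u * F \<bar>x\<bar> + (1 - u) * F \<bar>y\<bar>"
  proof (cases "\<bar>x\<bar> = \<bar>y\<bar>")
    case False
    have "\<bar>z\<bar> \<le> u * \<bar>x\<bar> + (1 - u) * \<bar>y\<bar>"
      unfolding z_def using abs_triangle_ineq[of "u * x" "(1 - u) * y"] \<open>0 < u\<close> \<open>u < 1\<close>
      by (simp add: abs_mult)
    then have "F \<bar>z\<bar> \<le> F (u * \<bar>x\<bar> + (1 - u) * \<bar>y\<bar>)"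
      using \<open>0 < u\<close> \<open>u < 1\<close> by (intro strict_mono_on_leD[OF mono]) auto
    also have "\<dots> < u * F \<bar>x\<bar> + (1 - u) * F \<bar>y\<bar>"
      using conv False \<open>0 < u\<close> \<open>u < 1\<close> unfolding strict_convex_on_def by auto
    finally show ?thesis unfolding z_def .
  next
    case True
    then have "y = - x" "x \<noteq> 0"
      using \<open>x \<noteq> y\<close> by (auto simp: abs_eq_iff)
    then have "\<bar>z\<bar> = \<bar>2 * u - 1\<bar> * \<bar>x\<bar>"
      unfolding z_def by (simp add: abs_mult [symmetric] algebra_simps)
    also have "\<dots> < \<bar>x\<bar>"
      using \<open>x \<noteq> 0\<close> \<open>0 < u\<close> \<open>u < 1\<close> by (simp add: mult_less_cancel_right2)
    finally have "F \<bar>z\<bar> < F \<bar>x\<bar>"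
      by (intro strict_mono_onD[OF mono]) auto
    then show ?thesis unfolding z_def using True by (simp add: algebra_simps)
  qed
qed simp

lemma sinh_lt_mult_cosh:
  fixes v :: real
  assumes "0 < v"
  shows "sinh v < v * cosh v"
proof -
  have "(\<lambda>v. v * cosh v - sinh v) 0 < (\<lambda>v. v * cosh v - sinh v) v"
  proof (rule DERIV_pos_imp_increasing_open[OF assms])
    fix x :: real
    assume "0 < x"
    moreover have "DERIV (\<lambda>v. v * cosh v - sinh v) x :> x * sinh x"
      by (auto intro!: derivative_eq_intros)
    ultimately show "\<exists>y. DERIV (\<lambda>v. v * cosh v - sinh v) x :> y \<and> 0 < y"
      by auto
  qed (intro continuous_intros)
  then show ?thesis by simp
qed

lemma lt_sinh_mult_cosh:
  fixes v :: real
  assumes "0 < v"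
  shows "v < sinh v * cosh v"
proof -
  have "(\<lambda>v. sinh v * cosh v - v) 0 < (\<lambda>v. sinh v * cosh v - v) v"
  proof (rule DERIV_pos_imp_increasing_open[OF assms])
    fix x :: real
    assume "0 < x"
    moreover have "DERIV (\<lambda>v. sinh v * cosh v - v) x :> 2 * sinh x ^ 2"
      using cosh_square_eq[of x] by (auto intro!: derivative_eq_intros simp: power2_eq_square)
    ultimately show "\<exists>y. DERIV (\<lambda>v. sinh v * cosh v - v) x :> y \<and> 0 < y"
      by auto
  qed (intro continuous_intros)
  then show ?thesis by simp
qed

lemma sinh_div_strict_mono:
  fixes x y :: real
  assumes "0 < x" "x < y"
  shows "sinh x / x < sinh y / y"
proof -
  have "(\<lambda>v. sinh v / v) x < (\<lambda>v. sinh v / v) y"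
  proof (rule DERIV_pos_imp_increasing_open[OF assms(2)])
    fix z :: real
    assume "x < z"
    then have "0 < z" using assms by linarith
    have "DERIV (\<lambda>v. sinh v / v) z :> (z * cosh z - sinh z) / z\<^sup>2"
      using \<open>0 < z\<close> by (auto intro!: derivative_eq_intros simp: power2_eq_square field_simps)
    moreover have "0 < (z * cosh z - sinh z) / z\<^sup>2"
      using sinh_lt_mult_cosh[OF \<open>0 < z\<close>] \<open>0 < z\<close> by simp
    ultimately show "\<exists>d. DERIV (\<lambda>v. sinh v / v) z :> d \<and> 0 < d" by blast
  qed (use assms in \<open>intro continuous_intros, auto\<close>)
  then show ?thesis by simp
qed

lemma mult_cosh_div_sinh_strict_mono:
  fixes x y :: real
  assumes "0 < x" "x < y"
  shows "x * cosh x / sinh x < y * cosh y / sinh y"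
proof -
  have "(\<lambda>v. v * cosh v / sinh v) x < (\<lambda>v. v * cosh v / sinh v) y"
  proof (rule DERIV_pos_imp_increasing_open[OF assms(2)])
    fix z :: real
    assume "x < z"
    then have "0 < z" using assms by linarith
    have "cosh z * cosh z = sinh z * sinh z + 1"
      using cosh_square_eq[of z] by (simp add: power2_eq_square)
    then have "DERIV (\<lambda>v. v * cosh v / sinh v) z :> (sinh z * cosh z - z) / (sinh z)\<^sup>2"
      using \<open>0 < z\<close> by (auto intro!: derivative_eq_intros simp: power2_eq_square field_simps)
    moreover have "0 < (sinh z * cosh z - z) / (sinh z)\<^sup>2"
      using lt_sinh_mult_cosh[OF \<open>0 < z\<close>] \<open>0 < z\<close> by simp
    ultimately show "\<exists>d. DERIV (\<lambda>v. v * cosh v / sinh v) z :> d \<and> 0 < d" by blast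
  qed (use assms in \<open>intro continuous_intros, auto\<close>)
  then show ?thesis by simp
qed

definition sinhc :: "real \<Rightarrow> real" where
  "sinhc v = (if v = 0 then 1 else sinh v / v)"

lemma sinhc_pos: "0 < sinhc v"
  unfolding sinhc_def
  by (cases "v > 0"; cases "v < 0") (auto simp: divide_pos_pos divide_neg_neg)

lemma sinhc_minus [simp]: "sinhc (- v) = sinhc v"
  unfolding sinhc_def by simp

lemma isCont_sinhc: "isCont sinhc v"
proof (cases "v = 0")
  case True
  have "DERIV sinh 0 :> 1"
    by (rule derivative_eq_intros refl)+ simp
  then have "((\<lambda>v. sinh v / v) \<longlongrightarrow> 1) (at (0::real))"
    by (simp add: DERIV_def)
  then have "(sinhc \<longlongrightarrow> 1) (at 0)"
    by (rule Lim_transform_eventually) (auto simp: sinhc_def eventually_at_filter)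
  then show ?thesis
    using True by (simp add: isCont_def sinhc_def)
next
  case False
  have "\<forall>\<^sub>F w in nhds v. sinh w / w = sinhc w"
    using eventually_nhds_in_open[of "- {0}" v] False
    by (auto elim!: eventually_mono simp: sinhc_def)
  moreover have "isCont (\<lambda>v. sinh v / v) v"
    using False by (intro continuous_intros) auto
  ultimately show ?thesis
    by (simp add: isCont_cong)
qed

definition log_sinhc_ratio :: "real \<Rightarrow> real \<Rightarrow> real \<Rightarrow> real" where
  "log_sinhc_ratio p q x = ln (sinhc (p * x)) - ln (sinhc (q * x))"

definition log_sinhc_ratio_deriv :: "real \<Rightarrow> real \<Rightarrow> real \<Rightarrow> real" where
  "log_sinhc_ratio_deriv p q y = p * cosh (p * y) / sinh (p * y) - q * cosh (q * y) / sinh (q * y)"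

lemma log_sinhc_ratio_abs [simp]: "log_sinhc_ratio p q \<bar>x\<bar> = log_sinhc_ratio p q x"
  by (cases "0 \<le> x") (simp_all add: log_sinhc_ratio_def)

lemma continuous_on_log_sinhc_ratio: "continuous_on A (log_sinhc_ratio p q)"
proof -
  have "isCont (\<lambda>x. ln (sinhc (r * x))) x" for r x
    using sinhc_pos[of "r * x"]
    by (intro isCont_ln' isCont_o2[OF _ isCont_sinhc] continuous_intros) simp_all
  then show ?thesis
    unfolding log_sinhc_ratio_def by (intro continuous_at_imp_continuous_on) auto
qed

lemma DERIV_log_sinhc_ratio:
  assumes "0 < p" "0 < q" "0 < y"
  shows "DERIV (log_sinhc_ratio p q) y :> log_sinhc_ratio_deriv p q y"
proof (rule has_field_derivative_transform_within_open)
  show "DERIV (\<lambda>y. ln (sinh (p * y)) - ln (sinh (q * y)) + ln q - ln p) y :>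
      log_sinhc_ratio_deriv p q y"
    using assms by (auto intro!: derivative_eq_intros simp: log_sinhc_ratio_deriv_def field_simps)
next
  fix z :: real
  assume "z \<in> {0<..}"
  then have "0 < z" by simp
  have "ln (sinhc (r * z)) = ln (sinh (r * z)) - ln r - ln z" if "0 < r" for r
    using that \<open>0 < z\<close> by (simp add: sinhc_def ln_div ln_mult)
  then show "ln (sinh (p * z)) - ln (sinh (q * z)) + ln q - ln p = log_sinhc_ratio p q z"
    using assms by (simp add: log_sinhc_ratio_def)
qed (use assms in auto)

lemma log_sinhc_ratio_deriv_pos:
  assumes "0 < q" "q < p" "0 < y"
  shows "0 < log_sinhc_ratio_deriv p q y"
proof -
  have "q * y * cosh (q * y) / sinh (q * y) < p * y * cosh (p * y) / sinh (p * y)"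
    using mult_cosh_div_sinh_strict_mono[of "q * y" "p * y"] assms by simp
  moreover have "r * y * cosh (r * y) / sinh (r * y) = (r * cosh (r * y) / sinh (r * y)) * y" for r
    by simp
  ultimately have "(q * cosh (q * y) / sinh (q * y)) * y < (p * cosh (p * y) / sinh (p * y)) * y"
    by simp
  then have "q * cosh (q * y) / sinh (q * y) < p * cosh (p * y) / sinh (p * y)"
    using mult_less_cancel_right_pos[OF assms(3)] by blast
  then show ?thesis
    by (simp add: log_sinhc_ratio_deriv_def)
qed

lemma log_sinhc_ratio_deriv_strict_mono:
  assumes "0 < q" "q < p" "0 < y" "y < z"
  shows "log_sinhc_ratio_deriv p q y < log_sinhc_ratio_deriv p q z"
proof (rule DERIV_pos_imp_increasing_open[OF assms(4)])
  fix x :: real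
  assume "y < x"
  then have "0 < x" using assms by linarith
  have "cosh (r * x) * cosh (r * x) = sinh (r * x) * sinh (r * x) + 1" for r
    using cosh_square_eq[of "r * x"] by (simp add: power2_eq_square)
  then have "DERIV (log_sinhc_ratio_deriv p q) x :> (q / sinh (q * x))\<^sup>2 - (p / sinh (p * x))\<^sup>2"
    using assms \<open>0 < x\<close>
    by (auto intro!: derivative_eq_intros simp: log_sinhc_ratio_deriv_def [abs_def]
        power2_eq_square field_simps)
  moreover have "sinh (q * x) / q < sinh (p * x) / p"
    using sinh_div_strict_mono[of "q * x" "p * x"] assms \<open>0 < x\<close>
    by (simp add: field_simps)
  then have "(p / sinh (p * x))\<^sup>2 < (q / sinh (q * x))\<^sup>2"
    using assms \<open>0 < x\<close>
    by (intro power_strict_mono) (simp_all add: divide_less_eq field_simps)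
  ultimately show "\<exists>d. DERIV (log_sinhc_ratio_deriv p q) x :> d \<and> 0 < d"
    by auto
qed (use assms in \<open>auto simp: log_sinhc_ratio_deriv_def intro!: continuous_intros\<close>)

lemma strict_convex_on_log_sinhc_ratio:
  assumes "0 < q" "q < p"
  shows "strict_convex_on UNIV (log_sinhc_ratio p q)"
proof -
  have "strict_convex_on {0..} (log_sinhc_ratio p q)"
  proof (rule strict_convex_on_atLeast_deriv_strict_mono)
    show "DERIV (log_sinhc_ratio p q) z :> log_sinhc_ratio_deriv p q z" if "0 < z" for z
      using assms that by (intro DERIV_log_sinhc_ratio) auto
    show "log_sinhc_ratio_deriv p q z < log_sinhc_ratio_deriv p q w" if "0 < z" "z < w" for z w
      using assms that by (rule log_sinhc_ratio_deriv_strict_mono)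
  qed (rule continuous_on_log_sinhc_ratio)
  moreover have "strict_mono_on {0..} (log_sinhc_ratio p q)"
  proof (rule strict_mono_onI)
    fix x y :: real
    assume "x \<in> {0..}" "x < y"
    show "log_sinhc_ratio p q x < log_sinhc_ratio p q y"
    proof (rule DERIV_pos_imp_increasing_open[OF \<open>x < y\<close>])
      fix z
      assume "x < z"
      then have "0 < z" using \<open>x \<in> {0..}\<close> by simp
      then show "\<exists>d. DERIV (log_sinhc_ratio p q) z :> d \<and> 0 < d"
        using DERIV_log_sinhc_ratio[of p q z] log_sinhc_ratio_deriv_pos[of q p z] assms by auto
    qed (rule continuous_on_log_sinhc_ratio)
  qed
  ultimately have "strict_convex_on UNIV (\<lambda>x. log_sinhc_ratio p q \<bar>x\<bar>)"
    by (rule strict_convex_on_abs_comp)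
  then show ?thesis by simp
qed

lemma strict_concave_on_log_sinhc_ratio:
  assumes "0 < p" "p < q"
  shows "strict_concave_on UNIV (log_sinhc_ratio p q)"
proof -
  have "strict_convex_on UNIV (log_sinhc_ratio q p)"
    using assms by (rule strict_convex_on_log_sinhc_ratio)
  moreover have "log_sinhc_ratio q p = (\<lambda>x. - log_sinhc_ratio p q x)"
    by (simp add: log_sinhc_ratio_def fun_eq_iff)
  ultimately show ?thesis
    unfolding strict_concave_on_def by simp
qed

lemma powr_diff_eq_sinhc:
  fixes a b x :: real
  assumes "0 < a" "0 < b"
  defines "s \<equiv> (ln a - ln b) / 2"
  shows "a powr x - b powr x = 2 * exp (x * ((ln a + ln b) / 2)) * (s * x) * sinhc (s * x)"
proof -
  define m where "m = x * ((ln a + ln b) / 2)"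
  have "a powr x - b powr x = exp (m + s * x) - exp (m + - (s * x))"
    using assms by (simp add: powr_def m_def s_def algebra_simps add_divide_distrib diff_divide_distrib)
  also have "\<dots> = 2 * exp m * sinh (s * x)"
    by (simp only: exp_add) (simp add: sinh_field_def algebra_simps)
  also have "\<dots> = 2 * exp m * (s * x) * sinhc (s * x)"
    by (simp add: sinhc_def)
  finally show ?thesis
    unfolding m_def .
qed

lemma mult_less_mult_iff_ln_diff_less:
  fixes a b c d :: real
  assumes "0 < a" "0 < b" "0 < c" "0 < d"
  shows "b * c < a * d \<longleftrightarrow> ln c - ln d < ln a - ln b"
proof -
  have "b * c < a * d \<longleftrightarrow> ln (b * c) < ln (a * d)"
    using assms by simp
  then show ?thesis
    using assms by (auto simp: ln_mult)
qed

lemma gfun_eq_log_sinhc_ratio: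
  fixes a b c d :: real
  assumes "b < a" "0 < b" "d < c" "0 < d"
  defines "s \<equiv> (ln a - ln b) / 2" and "t \<equiv> (ln c - ln d) / 2"
  shows "gfun a b c d =
    (\<lambda>x. log_sinhc_ratio s t x + ((ln a + ln b - ln c - ln d) / 2) * x + ln (s / t))"
proof
  fix x :: real
  have "0 < s" "0 < t"
    using assms by (simp_all add: s_def t_def)
  show "gfun a b c d x = log_sinhc_ratio s t x + ((ln a + ln b - ln c - ln d) / 2) * x + ln (s / t)"
  proof (cases "x = 0")
    case True
    have "ln (a / b) = 2 * s" "ln (c / d) = 2 * t"
      using assms by (simp_all add: s_def t_def ln_div)
    then show ?thesis
      using True by (simp add: gfun_def log_sinhc_ratio_def sinhc_def)
  next
    case False
    define m where "m = x * ((ln a + ln b) / 2)"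
    define n where "n = x * ((ln c + ln d) / 2)"
    have "a powr x - b powr x = 2 * exp m * (s * x) * sinhc (s * x)"
      using powr_diff_eq_sinhc[of a b x] assms by (simp add: m_def s_def)
    moreover have "c powr x - d powr x = 2 * exp n * (t * x) * sinhc (t * x)"
      using powr_diff_eq_sinhc[of c d x] assms by (simp add: n_def t_def)
    ultimately have "(a powr x - b powr x) / (c powr x - d powr x)
        = exp (m - n) * ((s / t) * (sinhc (s * x) / sinhc (t * x)))"
      using False \<open>0 < t\<close> sinhc_pos[of "t * x"] by (simp add: exp_diff)
    moreover have "ln (exp (m - n) * ((s / t) * (sinhc (s * x) / sinhc (t * x))))
        = (m - n) + (ln (s / t) + (ln (sinhc (s * x)) - ln (sinhc (t * x))))"
      using \<open>0 < s\<close> \<open>0 < t\<close> sinhc_pos[of "s * x"] sinhc_pos[of "t * x"]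
      by (simp add: ln_mult ln_div)
    moreover have "m - n = ((ln a + ln b - ln c - ln d) / 2) * x"
      unfolding m_def n_def by (simp add: algebra_simps diff_divide_distrib add_divide_distrib)
    ultimately show ?thesis
      using False by (simp add: gfun_def log_sinhc_ratio_def)
  qed
qed

theorem theorem2p1:
  fixes a b c d :: real
  assumes "a > b" and "b \<ge> c" and "c > d" and "d > 0"
  shows "(a * d - b * c > 0 \<longrightarrow> strict_convex_on UNIV (gfun a b c d))
       \<and> (a * d - b * c < 0 \<longrightarrow> strict_concave_on UNIV (gfun a b c d))
       \<and> (a * d - b * c = 0 \<longrightarrow> (\<forall>x. gfun a b c d x = x * ln (b / d)))"
proof -
  define s where "s = (ln a - ln b) / 2"
  define t where "t = (ln c - ln d) / 2"
  define L where "L = (ln a + ln b - ln c - ln d) / 2"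
  have "0 < b" "0 < s" "0 < t"
    using assms by (simp_all add: s_def t_def)
  have g: "gfun a b c d = (\<lambda>x. log_sinhc_ratio s t x + L * x + ln (s / t))"
    using gfun_eq_log_sinhc_ratio[of b a d c] assms \<open>0 < b\<close> by (simp add: s_def t_def L_def)
  have "b * c < a * d \<longleftrightarrow> t < s" "a * d < b * c \<longleftrightarrow> s < t"
    using mult_less_mult_iff_ln_diff_less[of a b c d] mult_less_mult_iff_ln_diff_less[of b a d c]
      assms \<open>0 < b\<close> by (auto simp: s_def t_def)
  then show ?thesis
    unfolding g using \<open>0 < s\<close> \<open>0 < t\<close>
  proof (intro conjI impI)
    assume "a * d - b * c = 0"
    then have "s = t" and "L = ln (b / d)"
      using \<open>b * c < a * d \<longleftrightarrow> t < s\<close> \<open>a * d < b * c \<longleftrightarrow> s < t\<close> assms \<open>0 < b\<close>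
      by (auto simp: L_def s_def t_def ln_div)
    then show "\<forall>x. log_sinhc_ratio s t x + L * x + ln (s / t) = x * ln (b / d)"
      using \<open>0 < t\<close> by (simp add: log_sinhc_ratio_def)
  qed (auto intro!: strict_convex_on_add_affine strict_concave_on_add_affine
      strict_convex_on_log_sinhc_ratio strict_concave_on_log_sinhc_ratio)
qed

end
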